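(* Let $a\geq 3$ be an integer. For $m\geq 1$, the number $A_m$ of right $0$-pyramids of pieces of length $a$ and of size $m$ is $$A_m=\frac{1}{(a-1)m+1}\binom{am}{m}=\frac{(am)!}{m!\,((a-1)m+1)!}.$$
   Context: A piece is an open interval $]s,s+a[$ with $s\in\mathbb Z$; two pieces are concurrent iff their intervals intersect. A heap is a finite configuration obtained by successively dropping pieces vertically towards the horizontal axis, each coming to rest on the axis or on top of the highest previously placed piece whose interval meets its own; configurations (not dropping orders) are counted. A pyramid is a heap with a unique bottom piece (exactly one piece on the axis); its size is its number of pieces. A right $0$-pyramid is a pyramid whose bottom piece covers $]0,a[$ and is a leftmost piece (no piece covers $]t,t+a[$ with $t<0$). *)

theory Defs
  imports Complex_Main
begin

text \<open>A positioned piece is a pair (s, h): the piece covers the open interval ]s, s+a[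
  and lies at level h (h = 0 means resting on the horizontal axis).
  Two pieces ]s,s+a[ and ]t,t+a[ are concurrent iff the intervals meet, i.e. |s - t| < a.\<close>

definition concurrent :: "nat \<Rightarrow> int \<Rightarrow> int \<Rightarrow> bool" where
  "concurrent a s t \<longleftrightarrow> \<bar>s - t\<bar> < int a"

definition drop_level :: "nat \<Rightarrow> (int \<times> nat) set \<Rightarrow> int \<Rightarrow> nat" where
  "drop_level a H s =
     (if \<exists>p\<in>H. concurrent a s (fst p)
      then Suc (Max {snd p | p. p \<in> H \<and> concurrent a s (fst p)})
      else 0)"

inductive heap :: "nat \<Rightarrow> (int \<times> nat) set \<Rightarrow> bool" for a where
  empty: "heap a {}"
| drop: "heap a H \<Longrightarrow> heap a (insert (s, drop_level a H s) H)"

definition pyramid :: "nat \<Rightarrow> (int \<times> nat) set \<Rightarrow> bool" where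
  "pyramid a H \<longleftrightarrow> heap a H \<and> card {p \<in> H. snd p = 0} = 1"

definition right0_pyramid :: "nat \<Rightarrow> (int \<times> nat) set \<Rightarrow> bool" where
  "right0_pyramid a H \<longleftrightarrow> pyramid a H \<and> {p \<in> H. snd p = 0} = {(0, 0)}
      \<and> (\<forall>p\<in>H. 0 \<le> fst p)"

end

theory Submission
  imports Defs
begin

text \<open>A heap is determined statically: it is a finite set of pieces in which concurrent pieces
  lie on different levels and every raised piece rests on a concurrent piece one level lower.
  Call a heap \<open>j\<close>-bounded if its pieces lie at positions \<open>\<ge> 0\<close> and its ground pieces at
  positions \<open>< j\<close>. A \<open>(j+1)\<close>-bounded heap either is \<open>j\<close>-bounded or has a ground piece at \<open>j\<close>;
  removing that piece and letting the rest fall is a bijection onto the \<open>(j+a)\<close>-bounded heaps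
  with one piece less, since every piece that lands on the ground was concurrent with the removed
  one. Hence the numbers of \<open>j\<close>-bounded heaps with \<open>m\<close> pieces satisfy the recurrence of the
  Raney numbers \<open>j/(am+j) \<cdot> binomial(am+j, m)\<close>, and the right 0-pyramids of size \<open>m \<ge> 1\<close> are
  exactly the 1-bounded heaps of size \<open>m\<close>.\<close>

lemma concurrent_refl: "a > 0 \<Longrightarrow> concurrent a s s"
  by (simp add: concurrent_def)

lemma concurrent_sym: "concurrent a s t \<longleftrightarrow> concurrent a t s"
  by (auto simp: concurrent_def)

definition separated :: "nat \<Rightarrow> (int \<times> nat) set \<Rightarrow> bool" where
  "separated a S \<longleftrightarrow>
     (\<forall>p\<in>S. \<forall>q\<in>S. p \<noteq> q \<and> concurrent a (fst p) (fst q) \<longrightarrow> snd p \<noteq> snd q)"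

definition stacked :: "nat \<Rightarrow> (int \<times> nat) set \<Rightarrow> bool" where
  "stacked a H \<longleftrightarrow> finite H \<and> separated a H \<and>
     (\<forall>p\<in>H. snd p > 0 \<longrightarrow> (\<exists>q\<in>H. concurrent a (fst p) (fst q) \<and> snd q = snd p - 1))"

lemma separated_subset: "separated a H \<Longrightarrow> S \<subseteq> H \<Longrightarrow> separated a S"
  unfolding separated_def by blast

subsection \<open>Heaps are the stacked configurations\<close>

lemma drop_level_eq:
  "drop_level a H s = (if \<exists>p\<in>H. concurrent a s (fst p)
     then Suc (Max (snd ` {p\<in>H. concurrent a s (fst p)})) else 0)"
proof -
  have "{snd p | p. p \<in> H \<and> concurrent a s (fst p)} = snd ` {p\<in>H. concurrent a s (fst p)}"
    by blast
  then show ?thesis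
    unfolding drop_level_def by simp
qed

lemma drop_level_gt:
  assumes "finite H" "p \<in> H" "concurrent a s (fst p)"
  shows "snd p < drop_level a H s"
  using assms by (auto simp: drop_level_eq less_Suc_eq_le intro!: Max_ge)

lemma drop_level_supported:
  assumes "finite H" "drop_level a H s > 0"
  obtains q where "q \<in> H" "concurrent a s (fst q)" "snd q = drop_level a H s - 1"
proof -
  let ?M = "snd ` {p\<in>H. concurrent a s (fst p)}"
  have ex: "\<exists>p\<in>H. concurrent a s (fst p)"
    using assms(2) by (auto simp: drop_level_eq split: if_splits)
  then have "Max ?M \<in> ?M"
    using assms(1) by (intro Max_in) auto
  moreover have "drop_level a H s = Suc (Max ?M)"
    using ex by (simp add: drop_level_eq)
  ultimately show ?thesis
    using that by auto
qed

lemma stacked_if_heap: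
  assumes "heap a H"
  shows "stacked a H"
  using assms
proof induction
  case empty
  then show ?case
    by (simp add: stacked_def separated_def)
next
  case (drop H s)
  let ?L = "drop_level a H s"
  have fin: "finite H"
    using drop.IH by (simp add: stacked_def)
  have below_new: "snd p < ?L" if "p \<in> H" "concurrent a s (fst p)" for p
    using drop_level_gt[OF fin that] .
  have "separated a (insert (s, ?L) H)"
    using drop.IH below_new unfolding stacked_def separated_def
    by (metis concurrent_sym fst_conv insert_iff less_irrefl snd_conv)
  moreover have "\<exists>q\<in>insert (s, ?L) H. concurrent a (fst p) (fst q) \<and> snd q = snd p - 1"
    if "p \<in> insert (s, ?L) H" "snd p > 0" for p
  proof (cases "p = (s, ?L)")
    case True
    then show ?thesis
      using that(2) drop_level_supported[OF fin] by (metis fst_conv insertI2 snd_conv)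
  next
    case False
    then show ?thesis
      using that drop.IH unfolding stacked_def by auto
  qed
  ultimately show ?case
    using fin unfolding stacked_def by auto
qed

text \<open>Conversely, a stacked configuration is rebuilt by dropping its pieces in order of
  increasing level: removing a highest piece leaves a stacked configuration, onto which that
  piece falls back to its own level.\<close>

lemma stacked_Diff_top:
  assumes "stacked a H" "(s, h) \<in> H" "\<forall>p\<in>H. snd p \<le> h"
  shows "stacked a (H - {(s, h)})"
proof -
  have "\<exists>q\<in>H - {(s, h)}. concurrent a (fst p) (fst q) \<and> snd q = snd p - 1"
    if p: "p \<in> H - {(s, h)}" "snd p > 0" for p
  proof -
    obtain q where "q \<in> H" "concurrent a (fst p) (fst q)" "snd q = snd p - 1"
      using assms(1) p unfolding stacked_def by blast
    moreover have "snd q < h"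
      using assms(3) p \<open>snd q = snd p - 1\<close> by force
    ultimately show ?thesis
      by auto
  qed
  then show ?thesis
    using assms(1) separated_subset unfolding stacked_def by (meson Diff_subset finite_Diff)
qed

lemma drop_level_Diff_top:
  assumes "stacked a H" "(s, h) \<in> H" "\<forall>p\<in>H. snd p \<le> h"
  shows "drop_level a (H - {(s, h)}) s = h"
proof -
  let ?H = "H - {(s, h)}"
  have fin: "finite ?H"
    using assms(1) by (simp add: stacked_def)
  have lower: "snd p < h" if "p \<in> ?H" "concurrent a s (fst p)" for p
  proof -
    have "snd p \<noteq> h"
      using assms(1,2) that unfolding stacked_def separated_def
      by (metis DiffD1 DiffD2 fst_conv insertI1 snd_conv)
    then show ?thesis
      using assms(3) that(1) by force
  qed
  show ?thesis
  proof (cases "h = 0")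
    case True
    then show ?thesis
      using lower by (auto simp: drop_level_eq)
  next
    case False
    then obtain r where r: "r \<in> H" "concurrent a s (fst r)" "snd r = h - 1"
      using assms(1,2) unfolding stacked_def by fastforce
    then have "r \<in> ?H"
      using False by auto
    have "Max (snd ` {p\<in>?H. concurrent a s (fst p)}) = h - 1"
    proof (rule Max_eqI)
      show "h - 1 \<in> snd ` {p\<in>?H. concurrent a s (fst p)}"
        using \<open>r \<in> ?H\<close> r by force
    qed (use fin lower in \<open>fastforce+\<close>)
    then show ?thesis
      using \<open>r \<in> ?H\<close> r False by (auto simp: drop_level_eq)
  qed
qed

lemma heap_if_stacked:
  assumes "stacked a H"
  shows "heap a H"
  using assms
proof (induction "card H" arbitrary: H rule: less_induct)
  case less
  show ?case
  proof (cases "H = {}")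
    case True
    then show ?thesis
      by (simp add: heap.empty)
  next
    case False
    have fin: "finite H"
      using less.prems by (simp add: stacked_def)
    have "Max (snd ` H) \<in> snd ` H"
      using fin False by (intro Max_in) auto
    then obtain s h where top: "(s, h) \<in> H" "h = Max (snd ` H)"
      by force
    then have highest: "\<forall>p\<in>H. snd p \<le> h"
      using fin by simp
    have "heap a (H - {(s, h)})"
      using less.hyps[OF card_Diff1_less[OF fin top(1)]]
        stacked_Diff_top[OF less.prems top(1) highest] by blast
    then have "heap a (insert (s, drop_level a (H - {(s, h)}) s) (H - {(s, h)}))"
      by (rule heap.drop)
    then show ?thesis
      using drop_level_Diff_top[OF less.prems top(1) highest] top(1) by (simp add: insert_absorb)
  qed
qed

lemma heap_iff_stacked: "heap a H \<longleftrightarrow> stacked a H"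
  using stacked_if_heap heap_if_stacked by blast

lemma stacked_ground_piece:
  assumes "stacked a H" "H \<noteq> {}"
  obtains p where "p \<in> H" "snd p = 0"
proof -
  have fin: "finite H"
    using assms(1) by (simp add: stacked_def)
  have "Min (snd ` H) \<in> snd ` H"
    using fin assms(2) by (intro Min_in) auto
  then obtain p where p: "p \<in> H" "snd p = Min (snd ` H)"
    by force
  have "snd p = 0"
  proof (rule ccontr)
    assume "snd p \<noteq> 0"
    then obtain q where "q \<in> H" "snd q = snd p - 1"
      using assms(1) p(1) unfolding stacked_def by blast
    moreover have "snd p \<le> snd q"
      using p fin \<open>q \<in> H\<close> by simp
    ultimately show False
      using \<open>snd p \<noteq> 0\<close> by simp
  qed
  then show ?thesis
    using that p(1) by blast
qed

subsection \<open>Letting a separated configuration settle\<close>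

text \<open>The rank of a piece is the level it reaches when the configuration falls under gravity
  while keeping the relative order of concurrent pieces.\<close>

definition below :: "nat \<Rightarrow> (int \<times> nat) set \<Rightarrow> int \<times> nat \<Rightarrow> (int \<times> nat) set" where
  "below a S p = {q\<in>S. concurrent a (fst p) (fst q) \<and> snd q < snd p}"

function rank :: "nat \<Rightarrow> (int \<times> nat) set \<Rightarrow> int \<times> nat \<Rightarrow> nat" where
  "rank a S p = (if below a S p = {} then 0 else Suc (Max (rank a S ` below a S p)))"
  by auto
termination
  by (relation "measure (\<lambda>(a, S, p). snd p)") (auto simp: below_def)

declare rank.simps[simp del]

lemma rank_less:
  assumes "finite S" "q \<in> below a S p"
  shows "rank a S q < rank a S p"
proof -
  have "rank a S q \<le> Max (rank a S ` below a S p)"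
    using assms by (intro Max_ge) (auto simp: below_def)
  then show ?thesis
    using assms(2) by (subst (2) rank.simps) auto
qed

lemma rank_supported:
  assumes "finite S" "rank a S p > 0"
  obtains q where "q \<in> below a S p" "rank a S q = rank a S p - 1"
proof -
  have ne: "below a S p \<noteq> {}"
    using assms(2) by (subst (asm) rank.simps) (auto split: if_splits)
  then have "Max (rank a S ` below a S p) \<in> rank a S ` below a S p"
    using assms(1) by (intro Max_in) (auto simp: below_def)
  moreover have "rank a S p = Suc (Max (rank a S ` below a S p))"
    using ne by (subst rank.simps) auto
  ultimately show ?thesis
    using that by auto
qed

lemma rank_eq_0_iff: "finite S \<Longrightarrow> rank a S p = 0 \<longleftrightarrow> below a S p = {}"
  using rank_less by (metis all_not_in_conv not_less0 rank.simps)

lemma rank_eq_level: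
  assumes "stacked a H" "p \<in> H"
  shows "rank a H p = snd p"
  using assms(2)
proof (induction "snd p" arbitrary: p rule: less_induct)
  case less
  show ?case
  proof (cases "snd p = 0")
    case True
    then show ?thesis
      by (subst rank.simps) (simp add: below_def)
  next
    case False
    then obtain q where q: "q \<in> H" "concurrent a (fst p) (fst q)" "snd q = snd p - 1"
      using assms(1) less.prems unfolding stacked_def by blast
    then have q_below: "q \<in> below a H p"
      using False by (auto simp: below_def)
    have "rank a H ` below a H p = snd ` below a H p"
      using less.hyps by (auto simp: below_def intro!: image_cong)
    moreover have "Max (snd ` below a H p) = snd p - 1"
    proof (rule Max_eqI)
      show "finite (snd ` below a H p)"
        using assms(1) by (simp add: stacked_def below_def)
      show "snd p - 1 \<in> snd ` below a H p"
        using q_below q(3) by (metis image_eqI)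
    qed (auto simp: below_def)
    ultimately show ?thesis
      using q_below False by (subst rank.simps) auto
  qed
qed

lemma rank_transfer:
  assumes bij: "bij_betw \<phi> S T"
    and fst_\<phi>: "\<And>p. p \<in> S \<Longrightarrow> fst (\<phi> p) = fst p"
    and order: "\<And>p q. p \<in> S \<Longrightarrow> q \<in> S \<Longrightarrow> concurrent a (fst p) (fst q) \<Longrightarrow>
                 snd q < snd p \<longleftrightarrow> snd (\<phi> q) < snd (\<phi> p)"
    and "p \<in> S"
  shows "rank a T (\<phi> p) = rank a S p"
  using \<open>p \<in> S\<close>
proof (induction "snd p" arbitrary: p rule: less_induct)
  case less
  have "below a T (\<phi> p) = \<phi> ` below a S p"
  proof
    show "below a T (\<phi> p) \<subseteq> \<phi> ` below a S p"
    proof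
      fix q' assume q': "q' \<in> below a T (\<phi> p)"
      then obtain q where q: "q \<in> S" "q' = \<phi> q"
        using bij by (auto simp: below_def bij_betw_def)
      then show "q' \<in> \<phi> ` below a S p"
        using q' order[OF less.prems q(1)] fst_\<phi>[OF q(1)] fst_\<phi>[OF less.prems]
        by (auto simp: below_def)
    qed
    show "\<phi> ` below a S p \<subseteq> below a T (\<phi> p)"
      using order[OF less.prems] fst_\<phi> less.prems bij by (auto simp: below_def bij_betw_def)
  qed
  moreover have "rank a T ` \<phi> ` below a S p = rank a S ` below a S p"
    unfolding image_image using less.hyps by (auto simp: below_def intro!: image_cong)
  ultimately show ?case
    by (subst (1 2) rank.simps) auto
qed

lemma separated_rank_less_iff:
  assumes "finite S" "separated a S" "p \<in> S" "q \<in> S" "concurrent a (fst p) (fst q)"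
  shows "rank a S q < rank a S p \<longleftrightarrow> snd q < snd p"
proof
  assume "snd q < snd p"
  then show "rank a S q < rank a S p"
    using assms by (intro rank_less) (auto simp: below_def concurrent_sym)
next
  assume r: "rank a S q < rank a S p"
  show "snd q < snd p"
  proof (rule ccontr)
    assume "\<not> snd q < snd p"
    moreover have "p \<noteq> q"
      using r by auto
    ultimately have "snd p < snd q"
      using assms unfolding separated_def by (metis nat_neq_iff)
    then have "rank a S p < rank a S q"
      using assms by (intro rank_less) (auto simp: below_def concurrent_sym)
    then show False
      using r by simp
  qed
qed

definition settle_piece :: "nat \<Rightarrow> (int \<times> nat) set \<Rightarrow> int \<times> nat \<Rightarrow> int \<times> nat" where
  "settle_piece a S p = (fst p, rank a S p)"

definition settle :: "nat \<Rightarrow> (int \<times> nat) set \<Rightarrow> (int \<times> nat) set" where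
  "settle a S = settle_piece a S ` S"

lemma inj_on_settle_piece:
  assumes "a > 0" "finite S" "separated a S"
  shows "inj_on (settle_piece a S) S"
proof (rule inj_onI)
  fix p q assume pq: "p \<in> S" "q \<in> S" "settle_piece a S p = settle_piece a S q"
  then have "fst p = fst q" "rank a S p = rank a S q"
    by (auto simp: settle_piece_def)
  moreover have "concurrent a (fst p) (fst q)"
    using \<open>fst p = fst q\<close> concurrent_refl[OF assms(1)] by simp
  ultimately show "p = q"
    using separated_rank_less_iff[OF assms(2,3) pq(1,2)]
      separated_rank_less_iff[OF assms(2,3) pq(2,1)] concurrent_sym assms(3) pq(1,2)
    unfolding separated_def by (metis nat_neq_iff)
qed

lemma card_settle:
  assumes "a > 0" "finite S" "separated a S"
  shows "card (settle a S) = card S"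
  using inj_on_settle_piece[OF assms] by (simp add: settle_def card_image)

lemma stacked_settle:
  assumes "finite S" "separated a S"
  shows "stacked a (settle a S)"
proof -
  have "separated a (settle a S)"
    unfolding separated_def settle_def
  proof (intro ballI impI)
    fix p' q' assume "p' \<in> settle_piece a S ` S" "q' \<in> settle_piece a S ` S"
      and h: "p' \<noteq> q' \<and> concurrent a (fst p') (fst q')"
    then obtain p q where pq: "p \<in> S" "q \<in> S" "p' = settle_piece a S p" "q' = settle_piece a S q"
      by auto
    then have "p \<noteq> q" "concurrent a (fst p) (fst q)"
      using h by (auto simp: settle_piece_def)
    then have "snd p \<noteq> snd q"
      using assms(2) pq unfolding separated_def by blast
    then show "snd p' \<noteq> snd q'"
      using separated_rank_less_iff[OF assms pq(1,2)] separated_rank_less_iff[OF assms pq(2,1)]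
        \<open>concurrent a (fst p) (fst q)\<close> pq concurrent_sym
      by (metis nat_neq_iff settle_piece_def snd_conv)
  qed
  moreover have "\<exists>q'\<in>settle a S. concurrent a (fst p') (fst q') \<and> snd q' = snd p' - 1"
    if p': "p' \<in> settle a S" "snd p' > 0" for p'
  proof -
    obtain p where p: "p \<in> S" "p' = settle_piece a S p"
      using p'(1) unfolding settle_def by blast
    moreover have "rank a S p > 0"
      using p p'(2) by (simp add: settle_piece_def)
    ultimately obtain q where "q \<in> below a S p" "rank a S q = rank a S p - 1"
      using rank_supported[OF assms(1)] by blast
    then show ?thesis
      using p by (intro bexI[of _ "settle_piece a S q"])
        (auto simp: settle_piece_def below_def settle_def)
  qed
  ultimately show ?thesis
    using assms(1) unfolding stacked_def settle_def by blast
qed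

lemma settle_eq_stacked:
  assumes "stacked a H" "bij_betw \<phi> H T"
    and "\<And>p. p \<in> H \<Longrightarrow> fst (\<phi> p) = fst p"
    and "\<And>p q. p \<in> H \<Longrightarrow> q \<in> H \<Longrightarrow> concurrent a (fst p) (fst q) \<Longrightarrow>
           snd q < snd p \<longleftrightarrow> snd (\<phi> q) < snd (\<phi> p)"
  shows "settle a T = H"
proof -
  have undo: "settle_piece a T (\<phi> p) = p" if "p \<in> H" for p
    using rank_transfer[OF assms(2-4) that] rank_eq_level[OF assms(1) that] assms(3)[OF that]
    by (simp add: settle_piece_def)
  have "settle a T = settle_piece a T ` \<phi> ` H"
    using assms(2) by (simp add: settle_def bij_betw_def)
  also have "\<dots> = H"
    unfolding image_image using undo by simp
  finally show ?thesis .
qed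

subsection \<open>Removing a ground piece\<close>

definition bounded_heaps :: "nat \<Rightarrow> nat \<Rightarrow> nat \<Rightarrow> (int \<times> nat) set set" where
  "bounded_heaps a j m = {H. stacked a H \<and> card H = m \<and> (\<forall>p\<in>H. 0 \<le> fst p)
     \<and> (\<forall>p\<in>H. snd p = 0 \<longrightarrow> fst p < int j)}"

definition cornered_heaps :: "nat \<Rightarrow> nat \<Rightarrow> nat \<Rightarrow> (int \<times> nat) set set" where
  "cornered_heaps a j m = {H \<in> bounded_heaps a j m. (int j - 1, 0) \<in> H}"

definition lift :: "(int \<times> nat) set \<Rightarrow> (int \<times> nat) set" where
  "lift H = (\<lambda>p. (fst p, Suc (snd p))) ` H"

definition remove_corner :: "nat \<Rightarrow> nat \<Rightarrow> (int \<times> nat) set \<Rightarrow> (int \<times> nat) set" where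
  "remove_corner a j H = settle a (H - {(int j - 1, 0)})"

definition add_corner :: "nat \<Rightarrow> nat \<Rightarrow> (int \<times> nat) set \<Rightarrow> (int \<times> nat) set" where
  "add_corner a j H = settle a (insert (int j - 1, 0) (lift H))"

lemma inj_on_lift_piece: "inj_on (\<lambda>p. (fst p, Suc (snd p))) H"
  by (auto simp: inj_on_def prod_eq_iff)

lemma finite_lift [simp]: "finite (lift H) \<longleftrightarrow> finite H"
  unfolding lift_def using inj_on_lift_piece by (rule finite_image_iff)

lemma card_lift [simp]: "card (lift H) = card H"
  unfolding lift_def using inj_on_lift_piece by (rule card_image)

lemma ground_notin_lift: "(c, 0) \<notin> lift H"
  by (auto simp: lift_def)

lemma separated_insert_lift:
  "separated a H \<Longrightarrow> separated a (insert (c, 0) (lift H))"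
  unfolding separated_def lift_def by auto

lemma settle_piece_ground:
  "settle_piece a (insert (c, 0) S) (c, 0) = (c, 0)"
  by (simp add: settle_piece_def rank.simps below_def)

lemma add_corner_remove_corner:
  assumes "a > 0" and H: "H \<in> cornered_heaps a j (Suc m)"
  shows "add_corner a j (remove_corner a j H) = H"
proof -
  let ?c = "(int j - 1, 0::nat)"
  let ?S = "H - {?c}"
  have stH: "stacked a H" and "?c \<in> H"
    using H by (auto simp: cornered_heaps_def bounded_heaps_def)
  then have H_eq: "H = insert ?c ?S"
    by auto
  have finS: "finite ?S" and sepH: "separated a H" and sepS: "separated a ?S"
    using stH separated_subset by (auto simp: stacked_def)
  define \<phi> where "\<phi> p = (if p = ?c then ?c else (fst p, Suc (rank a ?S p)))" for p
  have "\<phi> ` ?S = lift (settle a ?S)"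
    unfolding lift_def settle_def image_image by (auto simp: \<phi>_def settle_piece_def)
  then have img: "\<phi> ` H = insert ?c (lift (settle a ?S))"
    by (subst H_eq) (auto simp: \<phi>_def)
  have "inj_on \<phi> ?S"
    using inj_on_settle_piece[OF assms(1) finS sepS]
    by (auto simp: inj_on_def \<phi>_def settle_piece_def)
  moreover have "\<phi> ?c \<notin> \<phi> ` ?S"
    by (auto simp: \<phi>_def)
  ultimately have "inj_on \<phi> H"
    using inj_on_insert[of \<phi> ?c ?S] H_eq by (metis Diff_idemp)
  moreover have "snd q < snd p \<longleftrightarrow> snd (\<phi> q) < snd (\<phi> p)"
    if "p \<in> H" "q \<in> H" "concurrent a (fst p) (fst q)" for p q
  proof -
    have "snd p \<noteq> 0" if "p \<noteq> ?c" "q = ?c"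
      using sepH \<open>p \<in> H\<close> \<open>q \<in> H\<close> \<open>concurrent a (fst p) (fst q)\<close> that
      unfolding separated_def by (metis snd_conv)
    then show ?thesis
      using separated_rank_less_iff[OF finS sepS, of p q] that by (auto simp: \<phi>_def)
  qed
  ultimately have "settle a (insert ?c (lift (settle a ?S))) = H"
    using img by (intro settle_eq_stacked[OF stH, of \<phi>]) (auto simp: bij_betw_def \<phi>_def)
  then show ?thesis
    by (simp add: add_corner_def remove_corner_def)
qed

lemma remove_corner_add_corner:
  assumes "a > 0" and H: "H \<in> bounded_heaps a (j + a - 1) m"
  shows "remove_corner a j (add_corner a j H) = H"
proof -
  let ?c = "(int j - 1, 0::nat)"
  let ?T = "insert ?c (lift H)"
  have stH: "stacked a H"
    using H by (simp add: bounded_heaps_def)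
  then have finT: "finite ?T" and sepT: "separated a ?T"
    by (auto simp: stacked_def separated_insert_lift)
  have injT: "inj_on (settle_piece a ?T) ?T"
    using inj_on_settle_piece[OF assms(1) finT sepT] .
  define \<phi> where "\<phi> p = settle_piece a ?T (fst p, Suc (snd p))" for p
  have lifted: "(fst p, Suc (snd p)) \<in> ?T" if "p \<in> H" for p
    using that by (auto simp: lift_def)
  have \<phi>_eq_iff: "\<phi> p = \<phi> q \<longleftrightarrow> p = q" if "p \<in> H" "q \<in> H" for p q
    using inj_onD[OF injT _ lifted[OF that(1)] lifted[OF that(2)]] by (auto simp: \<phi>_def prod_eq_iff)
  have "settle a ?T = insert ?c (\<phi> ` H)"
    unfolding settle_def lift_def image_insert image_image settle_piece_ground \<phi>_def ..
  moreover have "?c \<notin> \<phi> ` H"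
  proof
    assume "?c \<in> \<phi> ` H"
    then obtain p where "p \<in> H" "settle_piece a ?T (fst p, Suc (snd p)) = settle_piece a ?T ?c"
      by (auto simp: \<phi>_def settle_piece_ground)
    then have "(fst p, Suc (snd p)) = ?c"
      using inj_onD[OF injT] lifted by blast
    then show False
      by simp
  qed
  ultimately have img: "\<phi> ` H = settle a ?T - {?c}"
    by auto
  have "inj_on \<phi> H"
    using \<phi>_eq_iff by (auto intro: inj_onI)
  moreover have "snd q < snd p \<longleftrightarrow> snd (\<phi> q) < snd (\<phi> p)"
    if "p \<in> H" "q \<in> H" "concurrent a (fst p) (fst q)" for p q
    using separated_rank_less_iff[OF finT sepT lifted[OF that(1)] lifted[OF that(2)]] that(3)
    by (simp add: \<phi>_def settle_piece_def)
  ultimately have "settle a (settle a ?T - {?c}) = H"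
    using img by (intro settle_eq_stacked[OF stH, of \<phi>])
      (auto simp: bij_betw_def \<phi>_def settle_piece_def)
  then show ?thesis
    by (simp add: add_corner_def remove_corner_def)
qed

lemma ground_settle_Diff:
  assumes "stacked a H" "p' \<in> settle a (H - {(c, 0)})" "snd p' = 0"
  shows "(fst p', 0) \<in> H \<or> concurrent a (fst p') c"
proof -
  let ?S = "H - {(c, 0)}"
  have finS: "finite ?S"
    using assms(1) by (simp add: stacked_def)
  obtain p where p: "p \<in> ?S" "p' = settle_piece a ?S p"
    using assms(2) unfolding settle_def by blast
  then have none_below: "below a ?S p = {}"
    using assms(3) rank_eq_0_iff[OF finS] by (simp add: settle_piece_def)
  show ?thesis
  proof (cases "snd p = 0")
    case True
    then show ?thesis
      using p by (cases p) (simp add: settle_piece_def)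
  next
    case False
    then obtain q where q: "q \<in> H" "concurrent a (fst p) (fst q)" "snd q = snd p - 1"
      using assms(1) p(1) unfolding stacked_def by blast
    have "q \<notin> below a ?S p"
      using none_below by simp
    then have "q = (c, 0)"
      using q False by (auto simp: below_def)
    then show ?thesis
      using q(2) p by (simp add: settle_piece_def)
  qed
qed

lemma ground_settle_insert_lift:
  assumes "stacked a H" "p' \<in> settle a (insert (c, 0) (lift H))" "snd p' = 0"
  shows "p' = (c, 0) \<or> (fst p', 0) \<in> H \<and> \<not> concurrent a (fst p') c"
proof -
  let ?T = "insert (c, 0) (lift H)"
  have finT: "finite ?T"
    using assms(1) by (simp add: stacked_def)
  obtain p where p: "p \<in> ?T" "p' = settle_piece a ?T p"
    using assms(2) unfolding settle_def by blast
  then have none_below: "below a ?T p = {}"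
    using assms(3) rank_eq_0_iff[OF finT] by (simp add: settle_piece_def)
  show ?thesis
  proof (cases "p = (c, 0)")
    case True
    then show ?thesis
      using p settle_piece_ground[of a c "lift H"] by simp
  next
    case False
    then have "p \<in> lift H"
      using p(1) by simp
    then obtain s h where sh: "(s, h) \<in> H" "p = (s, Suc h)"
      unfolding lift_def by force
    have "h = 0"
    proof (rule ccontr)
      assume "h \<noteq> 0"
      then obtain q where "q \<in> H" "concurrent a s (fst q)" "snd q = h - 1"
        using assms(1) sh unfolding stacked_def by fastforce
      then have "(fst q, Suc (snd q)) \<in> below a ?T p"
        using sh \<open>h \<noteq> 0\<close> by (auto simp: below_def lift_def)
      then show False
        using none_below by simp
    qed
    moreover have "\<not> concurrent a s c"
      using none_below sh by (auto simp: below_def)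
    ultimately show ?thesis
      using p sh by (simp add: settle_piece_def)
  qed
qed

lemma remove_corner_mem:
  assumes "a > 0" "j \<ge> 1" and H: "H \<in> cornered_heaps a j (Suc m)"
  shows "remove_corner a j H \<in> bounded_heaps a (j + a - 1) m"
proof -
  let ?c = "(int j - 1, 0::nat)"
  let ?S = "H - {?c}"
  have stH: "stacked a H" and "?c \<in> H"
    using H by (auto simp: cornered_heaps_def bounded_heaps_def)
  have finS: "finite ?S" and sepS: "separated a ?S"
    using stH separated_subset by (auto simp: stacked_def)
  have "card (remove_corner a j H) = m"
    unfolding remove_corner_def using card_settle[OF assms(1) finS sepS] H \<open>?c \<in> H\<close>
    by (simp add: cornered_heaps_def bounded_heaps_def)
  moreover have "\<forall>p\<in>remove_corner a j H. 0 \<le> fst p"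
    using H by (auto simp: remove_corner_def settle_def settle_piece_def
        cornered_heaps_def bounded_heaps_def)
  moreover have "fst p' < int (j + a - 1)"
    if "p' \<in> remove_corner a j H" "snd p' = 0" for p'
    using ground_settle_Diff[OF stH, of p' "int j - 1"] that H assms(1,2)
    by (auto simp: remove_corner_def cornered_heaps_def bounded_heaps_def concurrent_def)
  ultimately show ?thesis
    using stacked_settle[OF finS sepS]
    unfolding bounded_heaps_def remove_corner_def by blast
qed

lemma add_corner_mem:
  assumes "a > 0" "j \<ge> 1" and H: "H \<in> bounded_heaps a (j + a - 1) m"
  shows "add_corner a j H \<in> cornered_heaps a j (Suc m)"
proof -
  let ?c = "(int j - 1, 0::nat)"
  let ?T = "insert ?c (lift H)"
  have stH: "stacked a H"
    using H by (simp add: bounded_heaps_def)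
  then have finT: "finite ?T" and sepT: "separated a ?T"
    by (auto simp: stacked_def separated_insert_lift)
  have "card (add_corner a j H) = Suc m"
    using card_settle[OF assms(1) finT sepT] H finT ground_notin_lift
    by (simp add: add_corner_def bounded_heaps_def)
  moreover have "\<forall>p\<in>add_corner a j H. 0 \<le> fst p"
    using H assms(2) by (auto simp: add_corner_def settle_def settle_piece_def
        bounded_heaps_def lift_def)
  moreover have "fst p' < int j" if "p' \<in> add_corner a j H" "snd p' = 0" for p'
    using ground_settle_insert_lift[OF stH, of p' "int j - 1"] that H assms(2)
    by (auto simp: add_corner_def bounded_heaps_def concurrent_def)
  moreover have "?c \<in> add_corner a j H"
    unfolding add_corner_def settle_def using settle_piece_ground by (metis insertI1 image_eqI)
  ultimately show ?thesis
    using stacked_settle[OF finT sepT]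
    unfolding cornered_heaps_def bounded_heaps_def add_corner_def by blast
qed

lemma bij_betw_add_corner:
  assumes "a > 0" "j \<ge> 1"
  shows "bij_betw (add_corner a j) (bounded_heaps a (j + a - 1) m) (cornered_heaps a j (Suc m))"
  by (rule bij_betw_byWitness[where f' = "remove_corner a j"])
    (use assms add_corner_remove_corner remove_corner_add_corner remove_corner_mem
      add_corner_mem in auto)

lemma bounded_heaps_Suc:
  "bounded_heaps a (Suc j) m = bounded_heaps a j m \<union> cornered_heaps a (Suc j) m"
proof -
  have "fst p < int j \<or> p = (int j, 0)" if "fst p < int (Suc j)" "snd p = 0" for p :: "int \<times> nat"
    using that by (cases p) auto
  then show ?thesis
    unfolding bounded_heaps_def cornered_heaps_def by fastforce
qed

lemma bounded_heaps_disjoint_cornered: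
  "bounded_heaps a j m \<inter> cornered_heaps a (Suc j) m = {}"
  by (force simp: bounded_heaps_def cornered_heaps_def)

lemma bounded_heaps_0: "bounded_heaps a j 0 = {{}}"
  by (auto simp: bounded_heaps_def stacked_def separated_def)

lemma bounded_heaps_no_ground: "bounded_heaps a 0 (Suc m) = {}"
proof -
  have False if "H \<in> bounded_heaps a 0 (Suc m)" for H
  proof -
    have "stacked a H" "H \<noteq> {}"
      using that by (auto simp: bounded_heaps_def)
    then obtain p where "p \<in> H" "snd p = 0"
      by (rule stacked_ground_piece)
    then show False
      using that by (force simp: bounded_heaps_def)
  qed
  then show ?thesis
    by blast
qed

subsection \<open>Raney numbers\<close>

text \<open>The Raney number \<open>j/(am+j) \<cdot> binomial(am+j, m)\<close> in factorial form; the case \<open>m = 0\<close>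
  is split off because for \<open>j = 0\<close> the factorial formula gives 0 instead of 1.\<close>

definition raney :: "nat \<Rightarrow> nat \<Rightarrow> nat \<Rightarrow> real" where
  "raney a j m = (if m = 0 then 1
     else real j * fact (a * m + j - 1) / (fact m * fact ((a - 1) * m + j)))"

lemma raney_Suc:
  "raney (Suc b) (Suc i) m = real (Suc i) * fact (Suc b * m + i) / (fact m * fact (b * m + Suc i))"
  by (cases "m = 0") (simp_all add: raney_def fact_Suc[of i] del: of_nat_Suc fact_Suc)

lemma raney_0: "m > 0 \<Longrightarrow> raney a 0 m = 0"
  by (simp add: raney_def)

lemma raney_Suc_Suc:
  assumes "a > 0"
  shows "raney a (Suc j) (Suc m) = raney a j (Suc m) + raney a (j + a) m"
proof -
  obtain b where a: "a = Suc b"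
    using assms by (cases a) auto
  show ?thesis
  proof (cases j)
    case 0
    define B where "B = Suc b * m + b"
    define E where "E = b * m + b"
    have args: "Suc b * Suc m + 0 = Suc B" "b * Suc m + Suc 0 = Suc E" "Suc b * m + b = B"
      "b * m + Suc b = Suc E"
      by (simp_all add: B_def E_def)
    have "raney a (Suc j) (Suc m) = fact (Suc B) / (fact (Suc m) * fact (Suc E))"
      using 0 raney_Suc[of b 0 "Suc m", unfolded args] by (simp add: a del: fact_Suc)
    also have "\<dots> = real a * fact B / (fact m * fact (Suc E))"
    proof -
      have "real (Suc B) = real a * real (Suc m)"
        by (simp add: a B_def algebra_simps)
      then show ?thesis
        unfolding fact_Suc[of B] fact_Suc[of m] by (simp add: field_simps del: of_nat_Suc fact_Suc)
    qed
    also have "\<dots> = raney a j (Suc m) + raney a (j + a) m"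
      using 0 raney_Suc[of b b m, unfolded args] by (simp add: a raney_0 del: fact_Suc)
    finally show ?thesis .
  next
    case (Suc i)
    define B where "B = Suc b * Suc m + i"
    define E where "E = b * Suc m + Suc i"
    have args: "Suc b * Suc m + Suc i = Suc B" "b * Suc m + Suc (Suc i) = Suc E"
      "Suc b * Suc m + i = B" "b * Suc m + Suc i = E"
      "Suc b * m + (i + a) = B" "b * m + Suc (i + a) = Suc E"
      by (simp_all add: a B_def E_def)
    have "raney a (Suc (Suc i)) (Suc m)
        = real (Suc (Suc i)) * fact (Suc B) / (fact (Suc m) * fact (Suc E))"
      using raney_Suc[of b "Suc i" "Suc m", unfolded args] by (simp add: a del: fact_Suc)
    also have "\<dots> = real (Suc i) * fact B / (fact (Suc m) * fact E)
        + real (Suc i + a) * fact B / (fact m * fact (Suc E))"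
    proof -
      have "real (Suc (Suc i)) * real (Suc B)
          = real (Suc i) * real (Suc E) + real (Suc i + a) * real (Suc m)"
        by (simp add: a B_def E_def algebra_simps)
      then show ?thesis
        unfolding fact_Suc[of B] fact_Suc[of E] fact_Suc[of m]
        by (simp add: field_simps del: of_nat_Suc fact_Suc)
    qed
    also have "\<dots> = raney a j (Suc m) + raney a (j + a) m"
      using Suc raney_Suc[of b i "Suc m", unfolded args] raney_Suc[of b "i + a" m, unfolded args]
      by (simp add: a del: fact_Suc)
    finally show ?thesis
      using Suc by simp
  qed
qed

lemma card_bounded_heaps:
  assumes "a > 0"
  shows "finite (bounded_heaps a j m) \<and> real (card (bounded_heaps a j m)) = raney a j m"
proof (induction m arbitrary: j)
  case 0
  then show ?case
    by (simp add: bounded_heaps_0 raney_def)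
next
  case (Suc m)
  note IH_m = Suc.IH
  show ?case
  proof (induction j)
    case 0
    then show ?case
      by (simp add: bounded_heaps_no_ground raney_def)
  next
    case (Suc j)
    then have fin_j: "finite (bounded_heaps a j (Suc m))"
      and card_j: "real (card (bounded_heaps a j (Suc m))) = raney a j (Suc m)"
      by simp_all
    have fin_ja: "finite (bounded_heaps a (j + a) m)"
      and card_ja: "real (card (bounded_heaps a (j + a) m)) = raney a (j + a) m"
      using IH_m[of "j + a"] by simp_all
    have bij: "bij_betw (add_corner a (Suc j)) (bounded_heaps a (j + a) m)
        (cornered_heaps a (Suc j) (Suc m))"
      using bij_betw_add_corner[OF assms, of "Suc j" m] by simp
    then have fin_c: "finite (cornered_heaps a (Suc j) (Suc m))"
      using bij_betw_finite fin_ja by blast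
    have card_c: "card (cornered_heaps a (Suc j) (Suc m)) = card (bounded_heaps a (j + a) m)"
      using bij_betw_same_card[OF bij] by simp
    have "card (bounded_heaps a (Suc j) (Suc m))
        = card (bounded_heaps a j (Suc m)) + card (cornered_heaps a (Suc j) (Suc m))"
      unfolding bounded_heaps_Suc
      using fin_j fin_c bounded_heaps_disjoint_cornered by (rule card_Un_disjoint)
    then have "real (card (bounded_heaps a (Suc j) (Suc m))) = raney a j (Suc m) + raney a (j + a) m"
      using card_j card_ja card_c by simp
    then show ?case
      using fin_j fin_c raney_Suc_Suc[OF assms, of j m] by (simp add: bounded_heaps_Suc)
  qed
qed

lemma right0_pyramids_eq_bounded_heaps:
  assumes "a > 0" "m \<ge> 1"
  shows "{H. right0_pyramid a H \<and> card H = m} = bounded_heaps a 1 m"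
proof (intro set_eqI iffI)
  fix H assume "H \<in> {H. right0_pyramid a H \<and> card H = m}"
  then have "heap a H" "card H = m" "\<forall>p\<in>H. 0 \<le> fst p" and ground: "{p \<in> H. snd p = 0} = {(0, 0)}"
    by (auto simp: right0_pyramid_def pyramid_def)
  moreover have "fst p < 1" if "p \<in> H" "snd p = 0" for p
  proof -
    have "p \<in> {p \<in> H. snd p = 0}"
      using that by simp
    then show ?thesis
      unfolding ground by simp
  qed
  ultimately show "H \<in> bounded_heaps a 1 m"
    using heap_iff_stacked by (simp add: bounded_heaps_def)
next
  fix H assume H: "H \<in> bounded_heaps a 1 m"
  then have "stacked a H" "H \<noteq> {}"
    using assms(2) by (auto simp: bounded_heaps_def)
  then obtain p where p: "p \<in> H" "snd p = 0"
    by (rule stacked_ground_piece)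
  have origin: "q = (0, 0)" if "q \<in> H" "snd q = 0" for q
  proof -
    have "0 \<le> fst q" "fst q < 1"
      using H that by (auto simp: bounded_heaps_def)
    then show ?thesis
      using that(2) by (simp add: prod_eq_iff)
  qed
  then have "(0, 0) \<in> H"
    using p by metis
  then have "{p \<in> H. snd p = 0} = {(0, 0)}"
  proof (intro equalityI subsetI)
    fix q assume "q \<in> {p \<in> H. snd p = 0}"
    then show "q \<in> {(0, 0)}"
      using origin[of q] by simp
  qed simp
  moreover have "heap a H"
    using \<open>stacked a H\<close> heap_iff_stacked by simp
  ultimately show "H \<in> {H. right0_pyramid a H \<and> card H = m}"
    using H by (simp add: bounded_heaps_def right0_pyramid_def pyramid_def)
qed

lemma binomial_div_eq_fact:
  fixes k n :: nat
  assumes "k \<le> n"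
  shows "real (n choose k) / real (n - k + 1) = fact n / (fact k * fact (n - k + 1))"
  using binomial_fact[OF assms] by (simp add: field_simps del: of_nat_Suc)

theorem corollary1:
  fixes a m :: nat
  assumes "a \<ge> 3" and "m \<ge> 1"
  shows "real (card {H. right0_pyramid a H \<and> card H = m})
           = real ((a * m) choose m) / real ((a - 1) * m + 1)
       \<and> real (card {H. right0_pyramid a H \<and> card H = m})
           = fact (a * m) / (fact m * fact ((a - 1) * m + 1))"
proof -
  have "a > 0"
    using assms(1) by simp
  then have "real (card {H. right0_pyramid a H \<and> card H = m}) = raney a 1 m"
    using card_bounded_heaps right0_pyramids_eq_bounded_heaps assms(2) by simp
  also have "\<dots> = fact (a * m) / (fact m * fact ((a - 1) * m + 1))"
    using assms(2) by (simp add: raney_def)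
  finally have count: "real (card {H. right0_pyramid a H \<and> card H = m})
      = fact (a * m) / (fact m * fact ((a - 1) * m + 1))" .
  have "a * m - m = (a - 1) * m"
    by (simp add: diff_mult_distrib)
  then have "real ((a * m) choose m) / real ((a - 1) * m + 1)
      = fact (a * m) / (fact m * fact ((a - 1) * m + 1))"
    using binomial_div_eq_fact[of m "a * m"] \<open>a > 0\<close> by simp
  then show ?thesis
    using count by simp
qed

end
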